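(* Let $\gamma>0$, let $(\mu_t^\gamma)$ be a weak solution of the kinetic Vlasov--Fokker--Planck equation with parameter $\gamma$, $\rho_t^\gamma=\pi^x_\#\mu_t^\gamma$, $\bar\rho_t^\gamma=(\pi^x\circ\Gamma^\gamma)_\#\mu_t^\gamma$, let $\bar\jmath_t^\gamma(dx)=\int_{\mathbb{R}^d}\mathsf{F}(x-v/\gamma,\rho_t^\gamma)(\Gamma^\gamma_\#\mu_t^\gamma)(dxdv)$ and $\mathsf{e}_t^\gamma(x)=\frac{d\bar\jmath_t^\gamma}{d\bar\rho_t^\gamma}(x)-\mathsf{F}(x,\bar\rho_t^\gamma)$. Then \[\|\mathsf{e}_t^\gamma\|^2_{L^2(\bar\rho_t^\gamma)}\le\iint_{\mathbb{R}^d\times\mathbb{R}^d}\big|\mathsf{F}(x,\rho_t^\gamma)-\mathsf{F}(x+v/\gamma,\bar\rho_t^\gamma)\big|^2\,d\mu_t^\gamma.\]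
   Context: $\Gamma^\gamma(x,v)=(x+v/\gamma,v)$, $\pi^x(x,v)=x$. $\mathsf{F}(x,\rho)=-\nabla\Phi(x)-(\nabla K\star\rho)(x)$ with $\Phi\ge0$ and $K$ given potentials. Kinetic equation: $\partial_t\mu_t+\gamma v\cdot\nabla_x\mu_t+\gamma\nabla_v\cdot(\mu_t(\mathsf{F}(x,\rho_t)-\gamma v))=\gamma^2\Delta_v\mu_t$, $\rho_t=\pi^x_\#\mu_t$; weak solutions satisfy it in duality with $\mathcal{C}_c^\infty(\mathbb{R}^{2d})$ test functions. *)

theory Defs
  imports "HOL-Probability.Probability"
begin

text \<open>Phase space \<open>R^d x R^d\<close> is modelled as \<open>'a \<times> 'a\<close> with \<open>'a :: euclidean_space\<close>
  (so \<open>d = DIM('a)\<close>).\<close>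

definition Gam :: "real \<Rightarrow> 'a::euclidean_space \<times> 'a \<Rightarrow> 'a \<times> 'a" where
  "Gam \<gamma> p = (fst p + (1/\<gamma>) *\<^sub>R snd p, snd p)"

definition pix :: "'a \<times> 'a \<Rightarrow> 'a" where
  "pix p = fst p"

definition grad :: "('a::euclidean_space \<Rightarrow> real) \<Rightarrow> 'a \<Rightarrow> 'a" where
  "grad f x = (\<Sum>b\<in>Basis. frechet_derivative f (at x) b *\<^sub>R b)"

definition Force :: "('a::euclidean_space \<Rightarrow> real) \<Rightarrow> ('a \<Rightarrow> real) \<Rightarrow> 'a \<Rightarrow> 'a measure \<Rightarrow> 'a" where
  "Force \<Phi> K x \<rho> = - grad \<Phi> x - (\<integral>y. grad K (x - y) \<partial>\<rho>)"

fun Ck :: "nat \<Rightarrow> ('b::euclidean_space \<Rightarrow> real) \<Rightarrow> bool" where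
  "Ck 0 f = continuous_on UNIV f"
| "Ck (Suc n) f = (f differentiable_on UNIV \<and> continuous_on UNIV f \<and>
      (\<forall>b\<in>Basis. Ck n (\<lambda>p. frechet_derivative f (at p) b)))"

definition test_fun :: "('b::euclidean_space \<Rightarrow> real) \<Rightarrow> bool" where
  "test_fun \<phi> \<longleftrightarrow> (\<forall>n. Ck n \<phi>) \<and> compact (closure {p. \<phi> p \<noteq> 0})"

text \<open>Generator applied to a test function:
  \<open>\<gamma> v\<cdot>\<nabla>_x\<phi> + \<gamma> (F(x,\<rho>) - \<gamma> v)\<cdot>\<nabla>_v\<phi> + \<gamma>^2 \<Delta>_v\<phi>\<close>.\<close>
definition gen :: "real \<Rightarrow> ('a::euclidean_space \<Rightarrow> real) \<Rightarrow> ('a \<Rightarrow> real) \<Rightarrow> 'a measure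
    \<Rightarrow> ('a \<times> 'a \<Rightarrow> real) \<Rightarrow> 'a \<times> 'a \<Rightarrow> real" where
  "gen \<gamma> \<Phi> K \<rho> \<phi> p =
     (let x = fst p; v = snd p; D = (\<lambda>q. frechet_derivative \<phi> (at q)) in
       \<gamma> * D p (v, 0)
     + \<gamma> * D p (0, Force \<Phi> K x \<rho> - \<gamma> *\<^sub>R v)
     + \<gamma>^2 * (\<Sum>b\<in>Basis. frechet_derivative (\<lambda>q. D q (0, b)) (at p) (0, b)))"

definition weak_solution :: "real \<Rightarrow> ('a::euclidean_space \<Rightarrow> real) \<Rightarrow> ('a \<Rightarrow> real)
    \<Rightarrow> (real \<Rightarrow> ('a \<times> 'a) measure) \<Rightarrow> bool" where
  "weak_solution \<gamma> \<Phi> K \<mu> \<longleftrightarrow>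
     (\<forall>t\<ge>0. prob_space (\<mu> t) \<and> sets (\<mu> t) = sets borel) \<and>
     (\<forall>\<phi>. test_fun \<phi> \<longrightarrow>
        (\<forall>t\<ge>0. integrable (\<mu> t) (gen \<gamma> \<Phi> K (distr (\<mu> t) borel pix) \<phi>)) \<and>
        (\<forall>s t. 0 \<le> s \<longrightarrow> s \<le> t \<longrightarrow>
           set_integrable lborel {s..t}
             (\<lambda>r. \<integral>p. gen \<gamma> \<Phi> K (distr (\<mu> r) borel pix) \<phi> p \<partial>\<mu> r) \<and>
           (\<integral>p. \<phi> p \<partial>\<mu> t) - (\<integral>p. \<phi> p \<partial>\<mu> s)
             = (LINT r:{s..t}|lborel. \<integral>p. gen \<gamma> \<Phi> K (distr (\<mu> r) borel pix) \<phi> p \<partial>\<mu> r)))"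

end

theory Submission
  imports Defs
begin

text \<open>Push \<open>\<mu>\<^sub>t\<close> forward by \<open>\<Gamma>\<^sup>\<gamma>\<close>: then \<open>\<rho>bar\<close> is the first marginal of \<open>\<nu> = \<Gamma>\<^sup>\<gamma>\<^sub>#\<mu>\<^sub>t\<close>, and the
  density \<open>J\<close> of \<open>jbar\<close> is the conditional expectation under \<open>\<nu>\<close>, given the position \<open>x\<close>, of
  \<open>G(x,v) = F(x - v/\<gamma>, \<rho>)\<close>. Conditional expectation is an \<open>L\<^sup>2\<close>-contraction towards every
  function of \<open>x\<close>, in particular towards \<open>F(x, \<rho>bar)\<close>, and changing variables back through
  \<open>\<Gamma>\<^sup>\<gamma>\<close> turns \<open>\<integral> |G - F(x, \<rho>bar)|\<^sup>2 d\<nu>\<close> into the right-hand side.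

  The contraction needs \<open>F(\<cdot>, \<rho>bar)\<close> to be Borel measurable, although \<open>\<Phi>\<close> and \<open>K\<close> are
  arbitrary functions. The gradient of an arbitrary \<open>f : R\<^sup>d \<rightarrow> R\<close> is Borel: the points where
  \<open>w\<close> is an \<open>e\<close>-approximate gradient of \<open>f\<close> on a ball of radius \<open>d\<close> form a closed set, and
  both the set of points of differentiability and the preimages of open sets under the gradient
  are countable unions and intersections of such sets, with \<open>w\<close> ranging over a countable dense
  set.\<close>

text \<open>Comparing \<open>f\<close> at two points \<open>y, z\<close> of the ball, rather than with \<open>f x\<close>, makes
  this set closed in \<open>x\<close> without any regularity of \<open>f\<close>.\<close>

definition approx_grad_ball :: "('a::real_inner \<Rightarrow> real) \<Rightarrow> 'a \<Rightarrow> real \<Rightarrow> real \<Rightarrow> 'a set" where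
  "approx_grad_ball f w e d = {x. \<forall>y z. norm (y - x) < d \<longrightarrow> norm (z - x) < d \<longrightarrow>
      \<bar>f y - f z - w \<bullet> (y - z)\<bar> \<le> e * (norm (y - x) + norm (z - x))}"

definition approx_grad_points :: "('a::real_inner \<Rightarrow> real) \<Rightarrow> 'a \<Rightarrow> real \<Rightarrow> 'a set" where
  "approx_grad_points f w e = {x. \<exists>d>0. x \<in> approx_grad_ball f w e d}"

lemma closed_approx_grad_ball: "closed (approx_grad_ball f w e d)"
  unfolding approx_grad_ball_def
  by (intro closed_Collect_all closed_Collect_imp open_Collect_less closed_Collect_le continuous_intros)

lemma approx_grad_ball_antimono:
  "x \<in> approx_grad_ball f w e d \<Longrightarrow> d' \<le> d \<Longrightarrow> x \<in> approx_grad_ball f w e d'"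
  unfolding approx_grad_ball_def by auto

lemma approx_grad_ball_centre:
  assumes "x \<in> approx_grad_ball f w e d" and "norm (y - x) < d" and "d > 0"
  shows "\<bar>f y - f x - w \<bullet> (y - x)\<bar> \<le> e * norm (y - x)"
proof -
  have "\<bar>f y - f z - w \<bullet> (y - z)\<bar> \<le> e * (norm (y - x) + norm (z - x))"
    if "norm (z - x) < d" for z
    using assms(1,2) that unfolding approx_grad_ball_def by blast
  from this[of x] show ?thesis
    using assms(3) by simp
qed

lemma approx_grad_points_eq_UN:
  "approx_grad_points f w e = (\<Union>m. approx_grad_ball f w e (inverse (real (Suc m))))"
proof (intro set_eqI iffI)
  fix x assume "x \<in> approx_grad_points f w e"
  then obtain d where "d > 0" "x \<in> approx_grad_ball f w e d"
    unfolding approx_grad_points_def by blast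
  moreover obtain m where "inverse (real (Suc m)) < d"
    using reals_Archimedean[OF \<open>d > 0\<close>] by blast
  ultimately show "x \<in> (\<Union>m. approx_grad_ball f w e (inverse (real (Suc m))))"
    by (blast intro: approx_grad_ball_antimono less_imp_le)
next
  fix x assume "x \<in> (\<Union>m. approx_grad_ball f w e (inverse (real (Suc m))))"
  then obtain m where "x \<in> approx_grad_ball f w e (inverse (real (Suc m)))"
    by blast
  moreover have "inverse (real (Suc m)) > 0"
    by simp
  ultimately show "x \<in> approx_grad_points f w e"
    unfolding approx_grad_points_def by blast
qed

lemma approx_grad_points_borel: "approx_grad_points f w e \<in> sets borel"
  unfolding approx_grad_points_eq_UN by (intro sets.countable_UN image_subsetI borel_closed closed_approx_grad_ball)

lemma approx_grad_points_perturb: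
  assumes "x \<in> approx_grad_points f w e" and "norm (w' - w) \<le> h"
  shows "x \<in> approx_grad_points f w' (e + h)"
proof -
  obtain d where "d > 0" and x: "x \<in> approx_grad_ball f w e d"
    using assms(1) unfolding approx_grad_points_def by blast
  have "\<bar>f y - f z - w' \<bullet> (y - z)\<bar> \<le> (e + h) * (norm (y - x) + norm (z - x))"
    if "norm (y - x) < d" "norm (z - x) < d" for y z
  proof -
    have "\<bar>(w' - w) \<bullet> (y - z)\<bar> \<le> norm (w' - w) * norm (y - z)"
      by (rule Cauchy_Schwarz_ineq2)
    also have "\<dots> \<le> h * (norm (y - x) + norm (z - x))"
      using norm_triangle_ineq4[of "y - x" "z - x"] assms(2) order_trans[OF norm_ge_zero assms(2)]
      by (intro mult_mono) auto
    finally have "\<bar>(w' - w) \<bullet> (y - z)\<bar> \<le> h * (norm (y - x) + norm (z - x))" .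
    moreover have "\<bar>f y - f z - w \<bullet> (y - z)\<bar> \<le> e * (norm (y - x) + norm (z - x))"
      using x that unfolding approx_grad_ball_def by blast
    ultimately show ?thesis
      by (simp add: inner_diff_left distrib_right abs_le_iff)
  qed
  with \<open>d > 0\<close> show ?thesis
    unfolding approx_grad_points_def approx_grad_ball_def by blast
qed

lemma approx_grad_points_mono:
  assumes "x \<in> approx_grad_points f w e" and "e \<le> e'"
  shows "x \<in> approx_grad_points f w e'"
  using approx_grad_points_perturb[OF assms(1), of w "e' - e"] assms(2) by simp

lemma has_derivative_imp_approx_grad_points:
  assumes "(f has_derivative (\<lambda>h. g \<bullet> h)) (at x)" and "e > 0"
  shows "x \<in> approx_grad_points f g e"
proof -
  obtain d where "d > 0"
    and d: "\<And>y. norm (y - x) < d \<Longrightarrow> norm (f y - f x - g \<bullet> (y - x)) \<le> e * norm (y - x)"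
    using assms unfolding has_derivative_within_alt by blast
  have "\<bar>f y - f z - g \<bullet> (y - z)\<bar> \<le> e * (norm (y - x) + norm (z - x))"
    if "norm (y - x) < d" "norm (z - x) < d" for y z
    using d[OF that(1)] d[OF that(2)]
    by (simp add: inner_diff_right distrib_left abs_le_iff)
  with \<open>d > 0\<close> show ?thesis
    unfolding approx_grad_points_def approx_grad_ball_def by blast
qed

lemma approx_grad_points_imp_has_derivative:
  assumes "\<And>e. e > 0 \<Longrightarrow> x \<in> approx_grad_points f g e"
  shows "(f has_derivative (\<lambda>h. g \<bullet> h)) (at x)"
  unfolding has_derivative_within_alt
proof (intro conjI allI impI bounded_linear_inner_right)
  fix e :: real assume "e > 0"
  then obtain d where "d > 0" and x: "x \<in> approx_grad_ball f g e d"
    using assms unfolding approx_grad_points_def by blast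
  have "norm (f y - f x - g \<bullet> (y - x)) \<le> e * norm (y - x)" if "norm (y - x) < d" for y
    using approx_grad_ball_centre[OF x that \<open>d > 0\<close>] by simp
  with \<open>d > 0\<close> show "\<exists>d>0. \<forall>y\<in>UNIV. norm (y - x) < d \<longrightarrow>
      norm (f y - f x - g \<bullet> (y - x)) \<le> e * norm (y - x)"
    by blast
qed

text \<open>Two approximate gradients at the same point are close: test the defining inequality
  of both at \<open>z = x\<close> and \<open>y = x + t u\<close>, with \<open>u\<close> the unit vector in the direction \<open>w\<^sub>1 - w\<^sub>2\<close>.\<close>

lemma approx_grad_points_close:
  fixes f :: "'a::euclidean_space \<Rightarrow> real"
  assumes "x \<in> approx_grad_points f w\<^sub>1 e\<^sub>1" and "x \<in> approx_grad_points f w\<^sub>2 e\<^sub>2"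
  shows "norm (w\<^sub>1 - w\<^sub>2) \<le> e\<^sub>1 + e\<^sub>2"
proof -
  obtain d\<^sub>1 d\<^sub>2 where "d\<^sub>1 > 0" "d\<^sub>2 > 0"
    and x: "x \<in> approx_grad_ball f w\<^sub>1 e\<^sub>1 d\<^sub>1" "x \<in> approx_grad_ball f w\<^sub>2 e\<^sub>2 d\<^sub>2"
    using assms unfolding approx_grad_points_def by blast
  define u :: 'a where "u = (if w\<^sub>1 = w\<^sub>2 then (SOME b. b \<in> Basis) else sgn (w\<^sub>1 - w\<^sub>2))"
  define t where "t = min d\<^sub>1 d\<^sub>2 / 2"
  have t: "0 < t" "t < d\<^sub>1" "t < d\<^sub>2"
    using \<open>d\<^sub>1 > 0\<close> \<open>d\<^sub>2 > 0\<close> by (auto simp: t_def)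
  have "norm u = 1"
    by (simp add: u_def norm_sgn)
  define y where "y = x + t *\<^sub>R u"
  have ny: "norm (y - x) = t"
    using t \<open>norm u = 1\<close> by (simp add: y_def)
  have 1: "\<bar>f y - f x - w\<^sub>1 \<bullet> (y - x)\<bar> \<le> e\<^sub>1 * t"
    using approx_grad_ball_centre[OF x(1), of y] t ny \<open>d\<^sub>1 > 0\<close> by simp
  have 2: "\<bar>f y - f x - w\<^sub>2 \<bullet> (y - x)\<bar> \<le> e\<^sub>2 * t"
    using approx_grad_ball_centre[OF x(2), of y] t ny \<open>d\<^sub>2 > 0\<close> by simp
  have "t * norm (w\<^sub>1 - w\<^sub>2) = (w\<^sub>1 - w\<^sub>2) \<bullet> (y - x)"
    by (simp add: y_def u_def sgn_div_norm inner_commute power2_norm_eq_inner[symmetric]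
        power2_eq_square)
  also have "\<dots> = (f y - f x - w\<^sub>2 \<bullet> (y - x)) - (f y - f x - w\<^sub>1 \<bullet> (y - x))"
    by (simp add: inner_diff_left)
  also have "\<dots> \<le> (e\<^sub>1 + e\<^sub>2) * t"
    using 1 2 by (simp add: distrib_right abs_le_iff)
  finally show ?thesis
    using t by (simp add: mult.commute)
qed

lemma has_derivative_approx_grad_close:
  fixes f :: "'a::euclidean_space \<Rightarrow> real"
  assumes "(f has_derivative (\<lambda>h. g \<bullet> h)) (at x)" and "x \<in> approx_grad_points f w e"
  shows "norm (w - g) \<le> e"
proof (rule field_le_epsilon)
  fix h :: real assume "h > 0"
  then show "norm (w - g) \<le> e + h"
    using approx_grad_points_close[OF assms(2) has_derivative_imp_approx_grad_points[OF assms(1)]]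
    by blast
qed

lemma has_derivative_imp_dense_approx_grad:
  fixes f :: "'a::euclidean_space \<Rightarrow> real"
  assumes dense: "\<And>X. open X \<Longrightarrow> X \<noteq> {} \<Longrightarrow> \<exists>w\<in>W. w \<in> X"
    and "(f has_derivative (\<lambda>h. g \<bullet> h)) (at x)" and "e > 0"
  obtains w where "w \<in> W" "norm (w - g) < e" "x \<in> approx_grad_points f w (2 * e)"
proof -
  obtain w where "w \<in> W" "w \<in> ball g e"
    using dense[of "ball g e"] \<open>e > 0\<close> by auto
  then have "norm (w - g) < e"
    by (simp add: dist_norm norm_minus_commute)
  moreover have "x \<in> approx_grad_points f w (e + e)"
    by (rule approx_grad_points_perturb[OF has_derivative_imp_approx_grad_points[OF assms(2,3)]
          less_imp_le[OF \<open>norm (w - g) < e\<close>]])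
  ultimately show ?thesis
    using \<open>w \<in> W\<close> by (intro that) (simp_all only: mult_2)
qed

lemma approx_grad_points_Cauchy:
  fixes f :: "'a::euclidean_space \<Rightarrow> real"
  assumes w: "\<And>n. x \<in> approx_grad_points f (w n) (inverse (real (Suc n)))"
  shows "Cauchy w"
proof (rule metric_CauchyI)
  fix e :: real assume "e > 0"
  then obtain M where M: "inverse (real (Suc M)) < e / 2"
    using reals_Archimedean[of "e / 2"] by auto
  have "dist (w m) (w n) < e" if "M \<le> m" "M \<le> n" for m n
  proof -
    have "inverse (real (Suc m)) \<le> inverse (real (Suc M))"
      "inverse (real (Suc n)) \<le> inverse (real (Suc M))"
      using that by (auto intro!: le_imp_inverse_le)
    then show ?thesis
      unfolding dist_norm using approx_grad_points_close[OF w w, of m n] M by linarith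
  qed
  then show "\<exists>M. \<forall>m\<ge>M. \<forall>n\<ge>M. dist (w m) (w n) < e"
    by blast
qed

lemma approx_grad_points_limit:
  fixes f :: "'a::euclidean_space \<Rightarrow> real"
  assumes w: "\<And>n. x \<in> approx_grad_points f (w n) (inverse (real (Suc n)))"
  shows "\<exists>g. (f has_derivative (\<lambda>h. g \<bullet> h)) (at x)"
proof -
  obtain g where g: "w \<longlonglongrightarrow> g"
    using approx_grad_points_Cauchy[OF w] Cauchy_convergent_iff convergent_def by blast
  have wg: "norm (g - w n) \<le> inverse (real (Suc n))" for n
  proof -
    have "(\<lambda>k. norm (w k - w n)) \<longlonglongrightarrow> norm (g - w n)"
      by (intro tendsto_intros g)
    moreover have "(\<lambda>k. inverse (real (Suc k)) + inverse (real (Suc n)))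
        \<longlonglongrightarrow> 0 + inverse (real (Suc n))"
      by (intro tendsto_intros LIMSEQ_inverse_real_of_nat)
    ultimately have "norm (g - w n) \<le> 0 + inverse (real (Suc n))"
      using approx_grad_points_close[OF w w] by (blast intro: LIMSEQ_le)
    then show ?thesis
      by simp
  qed
  have "x \<in> approx_grad_points f g e" if "e > 0" for e
  proof -
    obtain n where n: "inverse (real (Suc n)) < e / 2"
      using reals_Archimedean[of "e / 2"] \<open>e > 0\<close> by auto
    have "x \<in> approx_grad_points f g (inverse (real (Suc n)) + inverse (real (Suc n)))"
      by (rule approx_grad_points_perturb[OF w wg])
    then show ?thesis
      by (rule approx_grad_points_mono) (use n in simp)
  qed
  then show ?thesis
    using approx_grad_points_imp_has_derivative by blast
qed

lemma linear_eq_inner_sum_Basis: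
  fixes L :: "'a::euclidean_space \<Rightarrow> real"
  assumes "linear L"
  shows "L h = (\<Sum>b\<in>Basis. L b *\<^sub>R b) \<bullet> h"
proof -
  have "L h = L (\<Sum>b\<in>Basis. (h \<bullet> b) *\<^sub>R b)"
    by (simp add: euclidean_representation)
  also have "\<dots> = (\<Sum>b\<in>Basis. (h \<bullet> b) * L b)"
    using assms by (simp add: linear_sum linear_scale)
  also have "\<dots> = (\<Sum>b\<in>Basis. (L b *\<^sub>R b) \<bullet> h)"
    by (intro sum.cong) (simp_all add: inner_commute)
  also have "\<dots> = (\<Sum>b\<in>Basis. L b *\<^sub>R b) \<bullet> h"
    by (rule inner_sum_left[symmetric])
  finally show ?thesis .
qed

lemma grad_has_derivative:
  fixes f :: "'a::euclidean_space \<Rightarrow> real"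
  assumes "f differentiable (at x)"
  shows "(f has_derivative (\<lambda>h. grad f x \<bullet> h)) (at x)"
proof -
  have d: "(f has_derivative frechet_derivative f (at x)) (at x)"
    using assms frechet_derivative_works by blast
  then have "frechet_derivative f (at x) = (\<lambda>h. grad f x \<bullet> h)"
    unfolding grad_def by (intro ext linear_eq_inner_sum_Basis has_derivative_linear)
  with d show ?thesis
    by simp
qed

text \<open>Off the points of differentiability, \<^const>\<open>frechet_derivative\<close> is the junk value
  \<open>SOME L. False\<close>, so the gradient there is one fixed vector.\<close>

lemma grad_not_differentiable:
  fixes f :: "'a::euclidean_space \<Rightarrow> real"
  assumes "\<not> f differentiable (at x)"
  shows "grad f x = (\<Sum>b\<in>Basis. (SOME L::'a \<Rightarrow> real. False) b *\<^sub>R b)"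
proof -
  have "(\<lambda>L. (f has_derivative L) (at x)) = (\<lambda>L. False)"
    using assms unfolding differentiable_def by auto
  then show ?thesis
    unfolding grad_def frechet_derivative_def by simp
qed

lemma differentiable_iff_dense_approx_grad:
  fixes f :: "'a::euclidean_space \<Rightarrow> real"
  assumes dense: "\<And>X. open X \<Longrightarrow> X \<noteq> {} \<Longrightarrow> \<exists>w\<in>W. w \<in> X"
  shows "f differentiable (at x) \<longleftrightarrow>
    (\<forall>n. \<exists>w\<in>W. x \<in> approx_grad_points f w (inverse (real (Suc n))))"
proof
  assume "f differentiable (at x)"
  then have g: "(f has_derivative (\<lambda>h. grad f x \<bullet> h)) (at x)"
    by (rule grad_has_derivative)
  show "\<forall>n. \<exists>w\<in>W. x \<in> approx_grad_points f w (inverse (real (Suc n)))"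
  proof
    fix n
    obtain w where "w \<in> W" "x \<in> approx_grad_points f w (2 * (inverse (real (Suc n)) / 2))"
      by (rule has_derivative_imp_dense_approx_grad[OF dense g, of "inverse (real (Suc n)) / 2"])
        auto
    then show "\<exists>w\<in>W. x \<in> approx_grad_points f w (inverse (real (Suc n)))"
      by auto
  qed
next
  assume "\<forall>n. \<exists>w\<in>W. x \<in> approx_grad_points f w (inverse (real (Suc n)))"
  then obtain w where "\<And>n. x \<in> approx_grad_points f (w n) (inverse (real (Suc n)))"
    by metis
  then show "f differentiable (at x)"
    using approx_grad_points_limit differentiableI by blast
qed

lemma grad_in_open_iff:
  fixes f :: "'a::euclidean_space \<Rightarrow> real"
  assumes dense: "\<And>X. open X \<Longrightarrow> X \<noteq> {} \<Longrightarrow> \<exists>w\<in>W. w \<in> X"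
    and "f differentiable (at x)" and "open U"
  shows "grad f x \<in> U \<longleftrightarrow> (\<exists>n. \<exists>w\<in>W. cball w (inverse (real (Suc n))) \<subseteq> U \<and>
    x \<in> approx_grad_points f w (inverse (real (Suc n))))"
    (is "_ \<longleftrightarrow> (\<exists>n. \<exists>w\<in>W. cball w (?r n) \<subseteq> U \<and> _)")
proof -
  have g: "(f has_derivative (\<lambda>h. grad f x \<bullet> h)) (at x)"
    using assms(2) by (rule grad_has_derivative)
  show ?thesis
  proof
    assume "grad f x \<in> U"
    then obtain r where "r > 0" and r: "ball (grad f x) r \<subseteq> U"
      using \<open>open U\<close> open_contains_ball by blast
    obtain n where n: "?r n < r / 2"
      using reals_Archimedean[of "r / 2"] \<open>r > 0\<close> by auto
    obtain w where "w \<in> W" and w: "norm (w - grad f x) < ?r n / 2"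
      and "x \<in> approx_grad_points f w (2 * (?r n / 2))"
      by (rule has_derivative_imp_dense_approx_grad[OF dense g, of "?r n / 2"]) auto
    then have "x \<in> approx_grad_points f w (?r n)"
      by simp
    moreover have "cball w (?r n) \<subseteq> U"
    proof
      fix y assume "y \<in> cball w (?r n)"
      then have "dist w y \<le> ?r n"
        by simp
      moreover have "dist (grad f x) w < ?r n / 2"
        using w by (simp add: dist_norm norm_minus_commute)
      ultimately have "dist (grad f x) y < r"
        using dist_triangle[of "grad f x" y w] zero_le_dist[of "grad f x" w] n by linarith
      then show "y \<in> U"
        using r by auto
    qed
    ultimately show "\<exists>n. \<exists>w\<in>W. cball w (?r n) \<subseteq> U \<and> x \<in> approx_grad_points f w (?r n)"
      using \<open>w \<in> W\<close> by blast
  next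
    assume "\<exists>n. \<exists>w\<in>W. cball w (?r n) \<subseteq> U \<and> x \<in> approx_grad_points f w (?r n)"
    then obtain n w where "cball w (?r n) \<subseteq> U" "x \<in> approx_grad_points f w (?r n)"
      by blast
    moreover from this(2) have "norm (w - grad f x) \<le> ?r n"
      by (rule has_derivative_approx_grad_close[OF g])
    then have "grad f x \<in> cball w (?r n)"
      by (simp add: dist_norm)
    ultimately show "grad f x \<in> U"
      by blast
  qed
qed

lemma approx_grad_points_UN_borel:
  "countable V \<Longrightarrow> (\<Union>w\<in>V. approx_grad_points f w e) \<in> sets borel"
  by (rule sets.countable_UN') (auto intro: approx_grad_points_borel)

lemma differentiable_points_borel:
  fixes f :: "'a::euclidean_space \<Rightarrow> real"
  shows "{x. f differentiable (at x)} \<in> sets borel"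
proof -
  obtain W :: "'a set" where "countable W"
    and dense: "\<And>X. open X \<Longrightarrow> X \<noteq> {} \<Longrightarrow> \<exists>w\<in>W. w \<in> X"
    using countable_dense_setE by blast
  have "{x. f differentiable (at x)}
      = (\<Inter>n. \<Union>w\<in>W. approx_grad_points f w (inverse (real (Suc n))))"
  proof (intro set_eqI)
    fix x
    show "x \<in> {x. f differentiable (at x)} \<longleftrightarrow>
        x \<in> (\<Inter>n. \<Union>w\<in>W. approx_grad_points f w (inverse (real (Suc n))))"
      using differentiable_iff_dense_approx_grad[OF dense, of f x] by simp
  qed
  then show ?thesis
    using \<open>countable W\<close>
    by (simp only:) (intro sets.countable_INT image_subsetI approx_grad_points_UN_borel; simp)
qed

theorem borel_measurable_grad:
  fixes f :: "'a::euclidean_space \<Rightarrow> real"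
  shows "grad f \<in> borel_measurable borel"
proof (rule borel_measurableI)
  fix U :: "'a set" assume "open U"
  obtain W :: "'a set" where "countable W"
    and dense: "\<And>X. open X \<Longrightarrow> X \<noteq> {} \<Longrightarrow> \<exists>w\<in>W. w \<in> X"
    using countable_dense_setE by blast
  define D where "D = {x. f differentiable (at x)}"
  define B where "B = (\<Union>n. \<Union>w\<in>{w\<in>W. cball w (inverse (real (Suc n))) \<subseteq> U}.
    approx_grad_points f w (inverse (real (Suc n))))"
  define C :: 'a where "C = (\<Sum>b\<in>Basis. (SOME L::'a \<Rightarrow> real. False) b *\<^sub>R b)"
  have D: "D \<in> sets borel"
    unfolding D_def by (rule differentiable_points_borel)
  have "B \<in> sets borel"
    unfolding B_def using \<open>countable W\<close>
    by (intro sets.countable_UN image_subsetI approx_grad_points_UN_borel) auto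
  moreover have "grad f -` U \<inter> space borel = (D \<inter> B) \<union> (if C \<in> U then - D else {})"
  proof (intro set_eqI)
    fix x
    show "x \<in> grad f -` U \<inter> space borel \<longleftrightarrow> x \<in> (D \<inter> B) \<union> (if C \<in> U then - D else {})"
    proof (cases "x \<in> D")
      case True
      then have "grad f x \<in> U \<longleftrightarrow> x \<in> B"
        using grad_in_open_iff[OF dense _ \<open>open U\<close>, of f x] unfolding D_def B_def by blast
      with True show ?thesis
        by simp
    next
      case False
      then have "grad f x = C"
        using grad_not_differentiable[of f x] unfolding D_def C_def by blast
      with False show ?thesis
        by simp
    qed
  qed
  ultimately show "grad f -` U \<inter> space borel \<in> sets borel"
    using D by auto
qed

lemma borel_measurable_Force:
  fixes \<Phi> K :: "'a::euclidean_space \<Rightarrow> real" and \<rho> :: "'a measure"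
  assumes "sigma_finite_measure \<rho>" and "sets \<rho> = sets borel"
  shows "(\<lambda>x. Force \<Phi> K x \<rho>) \<in> borel_measurable borel"
proof -
  interpret sigma_finite_measure \<rho> by (rule assms(1))
  note borel_measurable_grad[measurable]
  have "measurable ((borel :: 'a measure) \<Otimes>\<^sub>M \<rho>) (borel :: 'a measure)
      = measurable (borel \<Otimes>\<^sub>M borel) borel"
    by (rule measurable_cong_sets[OF sets_pair_measure_cong[OF refl assms(2)] refl])
  then have "(\<lambda>(x, y). grad K (x - y)) \<in> borel_measurable (borel \<Otimes>\<^sub>M \<rho>)"
    by (simp only:) measurable
  then have "(\<lambda>x. \<integral>y. grad K (x - y) \<partial>\<rho>) \<in> borel_measurable borel"
    by (intro borel_measurable_lebesgue_integral) simp
  then show ?thesis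
    unfolding Force_def by measurable
qed

text \<open>Here \<open>a\<close> is a version of the conditional expectation of \<open>g\<close> given \<open>F\<close>; the inequality
  is the conditional Jensen inequality for \<open>(g - c)\<^sup>2\<close>, integrated.\<close>

lemma (in finite_measure_subalgebra) cond_exp_sq_dist_le:
  fixes g a c :: "'a \<Rightarrow> real"
  assumes g: "integrable M g" and a: "a \<in> borel_measurable F" "integrable M a"
    and c: "c \<in> borel_measurable F"
    and version: "\<And>A. A \<in> sets F \<Longrightarrow> (\<integral>x\<in>A. g x \<partial>M) = (\<integral>x\<in>A. a x \<partial>M)"
  shows "(\<integral>\<^sup>+x. ennreal ((a x - c x)\<^sup>2) \<partial>M) \<le> (\<integral>\<^sup>+x. ennreal ((g x - c x)\<^sup>2) \<partial>M)"
proof (cases "(\<integral>\<^sup>+x. ennreal ((g x - c x)\<^sup>2) \<partial>M) = \<infinity>")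
  case False
  define Y where "Y = (\<lambda>x. g x - c x)"
  have cM: "c \<in> borel_measurable M"
    by (rule measurable_from_subalg[OF subalg c])
  have YM: "Y \<in> borel_measurable M"
    using g cM unfolding Y_def by measurable
  have "(\<lambda>x. (Y x)\<^sup>2) \<in> borel_measurable M"
    using YM by measurable
  then have Ysq: "integrable M (\<lambda>x. (Y x)\<^sup>2)"
    using False by (simp add: integrable_iff_bounded top.not_eq_extremum Y_def)
  have Yi: "integrable M Y"
    by (rule square_integrable_imp_integrable[OF YM Ysq])
  have ci: "integrable M c"
    using Bochner_Integration.integrable_diff[OF g Yi] by (simp add: Y_def)
  have "AE x in M. real_cond_exp M F Y x = real_cond_exp M F g x - real_cond_exp M F c x"
    unfolding Y_def by (rule real_cond_exp_diff[OF g ci])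
  moreover have "AE x in M. real_cond_exp M F g x = a x"
    by (rule real_cond_exp_charact[OF version g a(2) a(1)])
  moreover have "AE x in M. real_cond_exp M F c x = c x"
    by (rule real_cond_exp_F_meas[OF ci c])
  ultimately have EY: "AE x in M. real_cond_exp M F Y x = a x - c x"
    by eventually_elim simp
  have jensen: "AE x in M. (real_cond_exp M F Y x)\<^sup>2 \<le> real_cond_exp M F (\<lambda>x. (Y x)\<^sup>2) x"
    using real_cond_exp_jensens_inequality(2)[OF Yi _ _ Ysq convex_power2, of 0 0] by simp
  have EYsq: "integrable M (\<lambda>x. (real_cond_exp M F Y x)\<^sup>2)"
    using integrable_convex_cond_exp[OF Yi _ _ Ysq convex_power2, of 0 0] by simp
  have "(\<integral>\<^sup>+x. ennreal ((a x - c x)\<^sup>2) \<partial>M) = ennreal (\<integral>x. (real_cond_exp M F Y x)\<^sup>2 \<partial>M)"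
    using EY by (subst nn_integral_eq_integral[OF EYsq, symmetric]) (auto intro: nn_integral_cong_AE)
  also have "\<dots> \<le> ennreal (\<integral>x. real_cond_exp M F (\<lambda>x. (Y x)\<^sup>2) x \<partial>M)"
    by (intro ennreal_leI integral_mono_AE EYsq real_cond_exp_int(1)[OF Ysq] jensen)
  also have "\<dots> = ennreal (\<integral>x. (Y x)\<^sup>2 \<partial>M)"
    by (simp only: real_cond_exp_int(2)[OF Ysq])
  also have "\<dots> = (\<integral>\<^sup>+x. ennreal ((Y x)\<^sup>2) \<partial>M)"
    by (rule nn_integral_eq_integral[OF Ysq, symmetric]) simp
  finally show ?thesis
    unfolding Y_def .
qed simp

lemma nn_integral_power2_norm_eq_sum_Basis:
  fixes H :: "'a \<Rightarrow> 'b::euclidean_space"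
  assumes [measurable]: "H \<in> borel_measurable M"
  shows "(\<integral>\<^sup>+x. ennreal ((norm (H x))\<^sup>2) \<partial>M) = (\<Sum>b\<in>Basis. \<integral>\<^sup>+x. ennreal ((H x \<bullet> b)\<^sup>2) \<partial>M)"
proof -
  have "ennreal ((norm v)\<^sup>2) = (\<Sum>b\<in>Basis. ennreal ((v \<bullet> b)\<^sup>2))" for v :: 'b
  proof -
    have "(norm v)\<^sup>2 = (\<Sum>b\<in>Basis. (v \<bullet> b)\<^sup>2)"
      unfolding power2_norm_eq_inner by (subst euclidean_inner) (simp add: power2_eq_square)
    then show ?thesis
      by simp
  qed
  then show ?thesis
    by (simp only:) (rule nn_integral_sum, measurable)
qed

lemma set_integral_inner_left:
  fixes f :: "'a \<Rightarrow> 'b::euclidean_space"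
  assumes "integrable M f" and "S \<in> sets M"
  shows "(LINT x:S|M. f x) \<bullet> b = (LINT x:S|M. f x \<bullet> b)"
  using integral_inner_left[where c = b and M = M and f = "\<lambda>x. indicator S x *\<^sub>R f x"]
    integrable_mult_indicator[OF assms(2,1)]
  unfolding set_lebesgue_integral_def by simp

lemma (in finite_measure_subalgebra) cond_exp_sq_dist_le_euclidean:
  fixes G A C :: "'a \<Rightarrow> 'b::euclidean_space"
  assumes G: "integrable M G" and A: "A \<in> borel_measurable F" "integrable M A"
    and C: "C \<in> borel_measurable F"
    and version: "\<And>S. S \<in> sets F \<Longrightarrow> (LINT x:S|M. G x) = (LINT x:S|M. A x)"
  shows "(\<integral>\<^sup>+x. ennreal ((norm (A x - C x))\<^sup>2) \<partial>M) \<le> (\<integral>\<^sup>+x. ennreal ((norm (G x - C x))\<^sup>2) \<partial>M)"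
proof -
  have [measurable]: "G \<in> borel_measurable M" "A \<in> borel_measurable M" "C \<in> borel_measurable M"
    using G A C by (auto intro: measurable_from_subalg[OF subalg])
  have "(\<integral>\<^sup>+x. ennreal ((A x \<bullet> b - C x \<bullet> b)\<^sup>2) \<partial>M) \<le> (\<integral>\<^sup>+x. ennreal ((G x \<bullet> b - C x \<bullet> b)\<^sup>2) \<partial>M)"
    for b
  proof (rule cond_exp_sq_dist_le)
    show "integrable M (\<lambda>x. G x \<bullet> b)" "integrable M (\<lambda>x. A x \<bullet> b)"
      using G A(2) by simp_all
    show "(\<lambda>x. A x \<bullet> b) \<in> borel_measurable F" "(\<lambda>x. C x \<bullet> b) \<in> borel_measurable F"
      using borel_measurable_inner[OF A(1) borel_measurable_const]
        borel_measurable_inner[OF C borel_measurable_const] .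
    show "(\<integral>x\<in>S. G x \<bullet> b \<partial>M) = (\<integral>x\<in>S. A x \<bullet> b \<partial>M)" if "S \<in> sets F" for S
    proof -
      have "S \<in> sets M"
        using subalg that by (auto simp: subalgebra_def)
      then show ?thesis
        using version[OF that] set_integral_inner_left[OF G, of S b]
          set_integral_inner_left[OF A(2), of S b] by simp
    qed
  qed
  then have "(\<Sum>b\<in>Basis. \<integral>\<^sup>+x. ennreal (((A x - C x) \<bullet> b)\<^sup>2) \<partial>M)
      \<le> (\<Sum>b\<in>Basis. \<integral>\<^sup>+x. ennreal (((G x - C x) \<bullet> b)\<^sup>2) \<partial>M)"
    by (intro sum_mono) (simp add: inner_diff_left)
  moreover have "(\<lambda>x. A x - C x) \<in> borel_measurable M" "(\<lambda>x. G x - C x) \<in> borel_measurable M"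
    by measurable
  ultimately show ?thesis
    by (simp only: nn_integral_power2_norm_eq_sum_Basis)
qed

lemma borel_measurable_fst_borel [measurable]:
  "fst \<in> borel_measurable (borel :: ('a::topological_space \<times> 'b::topological_space) measure)"
  by (intro borel_measurable_continuous_onI continuous_intros)

text \<open>The case where \<open>F\<close> is generated by the first coordinate.\<close>

lemma marginal_sq_dist_le:
  fixes N :: "('a::topological_space \<times> 'b::topological_space) measure"
    and G :: "'a \<times> 'b \<Rightarrow> 'c::euclidean_space" and J H :: "'a \<Rightarrow> 'c"
  assumes "finite_measure N" and sets_N: "sets N = sets borel"
    and G: "integrable N G" and J: "J \<in> borel_measurable borel" "integrable (distr N borel fst) J"
    and H: "H \<in> borel_measurable borel"
    and version: "\<forall>A\<in>sets borel.
      (LINT p:A \<times> UNIV|N. G p) = (LINT x:A|distr N borel fst. J x)"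
  shows "(\<integral>\<^sup>+x. ennreal ((norm (J x - H x))\<^sup>2) \<partial>distr N borel fst)
    \<le> (\<integral>\<^sup>+p. ennreal ((norm (G p - H (fst p)))\<^sup>2) \<partial>N)"
proof -
  have space_N: "space N = UNIV"
    using sets_eq_imp_space_eq[OF sets_N] by simp
  have fst_N[measurable]: "fst \<in> measurable N borel"
    unfolding measurable_cong_sets[OF sets_N refl] by (rule borel_measurable_fst_borel)
  define F where "F = vimage_algebra (space N) fst (borel :: 'a measure)"
  have sets_F: "sets F = {A \<times> UNIV | A. A \<in> sets borel}"
    unfolding F_def space_N by (subst sets_vimage_algebra2) (auto simp: vimage_fst)
  have fst_F: "fst \<in> measurable F borel"
    unfolding F_def by (rule measurable_vimage_algebra1) simp
  have "subalgebra N F"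
    unfolding subalgebra_def
  proof
    show "sets F \<subseteq> sets N"
      using measurable_sets[OF fst_N] by (auto simp: sets_F space_N vimage_fst)
  qed (simp add: F_def)
  then interpret finite_measure_subalgebra N F
    using assms(1) by (simp add: finite_measure_subalgebra_def finite_measure_subalgebra_axioms_def)
  have J_N: "integrable N (\<lambda>p. J (fst p))"
    using J(2) by (simp add: integrable_distr_eq[OF fst_N J(1)])
  have "(\<integral>\<^sup>+p. ennreal ((norm (J (fst p) - H (fst p)))\<^sup>2) \<partial>N)
      \<le> (\<integral>\<^sup>+p. ennreal ((norm (G p - H (fst p)))\<^sup>2) \<partial>N)"
  proof (rule cond_exp_sq_dist_le_euclidean[OF G _ J_N])
    show "(\<lambda>p. J (fst p)) \<in> borel_measurable F" "(\<lambda>p. H (fst p)) \<in> borel_measurable F"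
      using measurable_compose[OF fst_F] J H by blast+
    show "(LINT p:S|N. G p) = (LINT p:S|N. J (fst p))" if "S \<in> sets F" for S
    proof -
      obtain A where A: "A \<in> sets borel" "S = A \<times> UNIV"
        using \<open>S \<in> sets F\<close> sets_F by blast
      have "(\<lambda>x. indicator A x *\<^sub>R J x) \<in> borel_measurable borel"
        by (intro borel_measurable_scaleR borel_measurable_indicator A(1) J(1))
      then have "(LINT x:A|distr N borel fst. J x) = (LINT p:A \<times> UNIV|N. J (fst p))"
        unfolding set_lebesgue_integral_def
        by (simp add: integral_distr[OF fst_N] indicator_def mem_Times_iff)
      then show ?thesis
        using version A by simp
    qed
  qed
  then show ?thesis
    using J H by (subst nn_integral_distr[OF fst_N]) auto
qed

lemma borel_measurable_Gam: "Gam \<gamma> \<in> borel_measurable borel"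
  unfolding Gam_def[abs_def] by (intro borel_measurable_continuous_onI continuous_intros)

lemma distr_pix_Gam:
  assumes "sets M = sets borel"
  shows "distr M borel (pix \<circ> Gam \<gamma>) = distr (distr M borel (Gam \<gamma>)) borel fst"
proof -
  have "Gam \<gamma> \<in> measurable M borel"
    unfolding measurable_cong_sets[OF assms refl] by (rule borel_measurable_Gam)
  then have "distr (distr M borel (Gam \<gamma>)) borel fst = distr M borel (fst \<circ> Gam \<gamma>)"
    by (rule distr_distr[OF borel_measurable_fst_borel])
  then show ?thesis
    by (simp add: pix_def[abs_def])
qed

theorem lemma3p9:
  fixes \<gamma> :: real and \<Phi> K :: "'a::euclidean_space \<Rightarrow> real"
    and \<mu> :: "real \<Rightarrow> ('a \<times> 'a) measure" and t :: real and J :: "'a \<Rightarrow> 'a"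
  assumes "\<gamma> > 0" and "\<forall>x. \<Phi> x \<ge> 0"
    and "weak_solution \<gamma> \<Phi> K \<mu>" and "t \<ge> 0"
  defines "\<rho> \<equiv> distr (\<mu> t) borel pix"
    and "\<rho>bar \<equiv> distr (\<mu> t) borel (pix \<circ> Gam \<gamma>)"
    and "\<nu> \<equiv> distr (\<mu> t) borel (Gam \<gamma>)"
  assumes jbar_def: "integrable \<nu> (\<lambda>p. Force \<Phi> K (fst p - (1/\<gamma>) *\<^sub>R snd p) \<rho>)"
    and J_meas: "J \<in> borel_measurable borel" and J_int: "integrable \<rho>bar J"
    and J_density: "\<forall>A\<in>sets borel.
          (LINT p:A \<times> UNIV|\<nu>. Force \<Phi> K (fst p - (1/\<gamma>) *\<^sub>R snd p) \<rho>) = (LINT x:A|\<rho>bar. J x)"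
  shows "(\<integral>\<^sup>+x. ennreal ((norm (J x - Force \<Phi> K x \<rho>bar))\<^sup>2) \<partial>\<rho>bar)
         \<le> (\<integral>\<^sup>+p. ennreal ((norm (Force \<Phi> K (fst p) \<rho>
                 - Force \<Phi> K (fst p + (1/\<gamma>) *\<^sub>R snd p) \<rho>bar))\<^sup>2) \<partial>\<mu> t)"
proof -
  have "prob_space (\<mu> t)" and sets_\<mu>: "sets (\<mu> t) = sets borel"
    using assms(3,4) unfolding weak_solution_def by auto
  have Gam[measurable]: "Gam \<gamma> \<in> measurable (\<mu> t) borel"
    unfolding measurable_cong_sets[OF sets_\<mu> refl] by (rule borel_measurable_Gam)
  have "prob_space \<nu>"
    unfolding \<nu>_def by (rule prob_space.prob_space_distr[OF \<open>prob_space (\<mu> t)\<close> Gam])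
  have \<rho>bar: "\<rho>bar = distr \<nu> borel fst"
    unfolding \<rho>bar_def \<nu>_def by (rule distr_pix_Gam[OF sets_\<mu>])
  have "prob_space \<rho>bar"
    unfolding \<rho>bar using \<open>prob_space \<nu>\<close>
    by (rule prob_space.prob_space_distr) (simp add: \<nu>_def borel_measurable_fst_borel)
  moreover have "sets \<rho>bar = sets borel"
    unfolding \<rho>bar_def by simp
  ultimately have [measurable]: "(\<lambda>x. Force \<Phi> K x \<rho>bar) \<in> borel_measurable borel"
    by (intro borel_measurable_Force prob_space_imp_sigma_finite)
  have "(\<integral>\<^sup>+x. ennreal ((norm (J x - Force \<Phi> K x \<rho>bar))\<^sup>2) \<partial>\<rho>bar)
      \<le> (\<integral>\<^sup>+p. ennreal ((norm (Force \<Phi> K (fst p - (1/\<gamma>) *\<^sub>R snd p) \<rho>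
            - Force \<Phi> K (fst p) \<rho>bar))\<^sup>2) \<partial>\<nu>)"
    by (rule marginal_sq_dist_le[where N = \<nu> and J = J
          and G = "\<lambda>p. Force \<Phi> K (fst p - (1/\<gamma>) *\<^sub>R snd p) \<rho>"
          and H = "\<lambda>x. Force \<Phi> K x \<rho>bar", folded \<rho>bar])
      (use \<open>prob_space \<nu>\<close> jbar_def J_meas J_int J_density in
        \<open>simp_all add: \<nu>_def prob_space_def\<close>)
  also have "\<dots> = (\<integral>\<^sup>+p. ennreal ((norm (Force \<Phi> K (fst p) \<rho>
                 - Force \<Phi> K (fst p + (1/\<gamma>) *\<^sub>R snd p) \<rho>bar))\<^sup>2) \<partial>\<mu> t)"
    using borel_measurable_integrable[OF jbar_def]
    unfolding \<nu>_def by (subst nn_integral_distr) (auto simp: Gam_def)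
  finally show ?thesis .
qed

end
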